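(* Every regular Stanley sequence of character $0$ has $S(0)$ as its core, where $S(0)=0,1,3,4,9,10,12,13,27,\ldots$ is the Stanley sequence generated by $\{0\}$.
   Context: A set of non-negative integers is 3-free if no three of its elements form an arithmetic progression. For a finite 3-free set $A=\{a_0<\cdots<a_k\}$ of non-negative integers, the Stanley sequence $S(A)=(a_n)_{n\ge0}$ is the increasing sequence with initial terms $a_0,\ldots,a_k$ in which each subsequent $a_{n+1}$ is the smallest integer greater than $a_n$ such that $\{a_0,\ldots,a_{n+1}\}$ is 3-free. Throughout, Stanley sequences are in root position ($a_0=0$). A Stanley sequence $(a_n)$ is independent with character $\lambda$ if for all sufficiently large $k$: $a_{2^k+i}=a_{2^k}+a_i$ for $0\le i<2^k$, and $a_{2^k}=2a_{2^k-1}-\lambda+1$. A Stanley sequence $(a_n)$ is regular with character $\lambda$ and core $(a'_n)$ if there exist a constant $\sigma$ and an independent Stanley sequence $(a'_n)$ of character $\lambda$ such that for all large $k$ and $0\le i<2^k$: $a_{2^k-\sigma+i}=a_{2^k-\sigma}+a'_i$ and $a_{2^k-\sigma}=2a_{2^k-\sigma-1}-\lambda+1$ (these data are unique). *)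

theory Defs
  imports Main
begin

definition three_free :: "nat set \<Rightarrow> bool" where
  "three_free S \<longleftrightarrow> (\<forall>x\<in>S. \<forall>y\<in>S. \<forall>z\<in>S. x < y \<and> y < z \<longrightarrow> x + z \<noteq> 2 * y)"

primrec greedy_ext :: "nat list \<Rightarrow> nat \<Rightarrow> nat list" where
  "greedy_ext xs 0 = xs"
| "greedy_ext xs (Suc n) =
     (let ys = greedy_ext xs n
      in ys @ [LEAST x. last ys < x \<and> three_free (insert x (set ys))])"

text \<open>The Stanley sequence S(A): its n-th term (meaningful for finite nonempty A).\<close>
definition stanley :: "nat set \<Rightarrow> nat \<Rightarrow> nat" where
  "stanley A n = greedy_ext (sorted_list_of_set A) n ! n"

definition is_stanley :: "(nat \<Rightarrow> nat) \<Rightarrow> bool" where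
  "is_stanley a \<longleftrightarrow> (\<exists>A. finite A \<and> three_free A \<and> 0 \<in> A \<and> a = stanley A)"

definition independent :: "(nat \<Rightarrow> nat) \<Rightarrow> int \<Rightarrow> bool" where
  "independent a lam \<longleftrightarrow> (\<exists>K. \<forall>k\<ge>K.
      (\<forall>i<2^k. a (2^k + i) = a (2^k) + a i) \<and>
      int (a (2^k)) = 2 * int (a (2^k - 1)) - lam + 1)"

definition regular_with :: "(nat \<Rightarrow> nat) \<Rightarrow> int \<Rightarrow> (nat \<Rightarrow> nat) \<Rightarrow> int \<Rightarrow> bool" where
  "regular_with a lam a' \<sigma> \<longleftrightarrow> is_stanley a' \<and> independent a' lam \<and>
     (\<exists>K. \<forall>k\<ge>K. (2::int)^k - \<sigma> \<ge> 1 \<and>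
        (let m = nat ((2::int)^k - \<sigma>) in
          (\<forall>i<2^k. a (m + i) = a m + a' i) \<and>
          int (a m) = 2 * int (a (m - 1)) - lam + 1))"

end

theory Submission
  imports Defs
begin

text \<open>An independent Stanley sequence a of character 0 is S(0). For a block length T = 2^k
  we have a(T) = 2 a(T-1) + 1, so the upper block a(T) + a(0..T-1) starts above twice the maximum
  of the lower block a(0..T-1). If some y strictly between a(n) and a(n+1) extended a(0..n) 3-freely,
  then a(T) + y would extend a(0..T+n) 3-freely: a progression ending at a(T) + y cannot reach into
  the lower block, and inside the upper block it shifts down to one ending at y. Since a(T) + y lies
  strictly between a(T+n) and a(T+n+1), this contradicts the greediness of a. Hence a is the greedy
  sequence started at 0. The core of a regular sequence of character 0 is such a sequence.\<close>

lemma three_free_subset: "T \<subseteq> S \<Longrightarrow> three_free S \<Longrightarrow> three_free T"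
  unfolding three_free_def by blast

lemma three_free_range_if_prefixes:
  fixes a :: "nat \<Rightarrow> nat"
  assumes "\<And>M. three_free (a ` {..<M})"
  shows "three_free (range a)"
  unfolding three_free_def
proof (intro ballI impI)
  fix x y z assume "x \<in> range a" "y \<in> range a" "z \<in> range a" and xyz: "x < y \<and> y < z"
  then obtain i j k where "x = a i" "y = a j" "z = a k" by blast
  then have "x \<in> a ` {..<Suc (i + j + k)}" "y \<in> a ` {..<Suc (i + j + k)}"
    "z \<in> a ` {..<Suc (i + j + k)}" by auto
  with assms xyz show "x + z \<noteq> 2 * y" unfolding three_free_def by blast
qed

lemma three_free_insert_large:
  assumes tf: "three_free S" and large: "\<forall>e\<in>S. 2 * e < x"
  shows "three_free (insert x S)"
  unfolding three_free_def
proof (intro ballI impI)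
  fix p q r assume mem: "p \<in> insert x S" "q \<in> insert x S" "r \<in> insert x S"
    and pqr: "p < q \<and> q < r"
  show "p + r \<noteq> 2 * q"
  proof (cases "r = x")
    case True
    then have "q \<in> S" using mem(2) pqr by auto
    then show ?thesis using large True by fastforce
  next
    case False
    then have "r \<in> S" using mem(3) by simp
    then have "r < x" using large by fastforce
    then have "p \<in> S" "q \<in> S" using mem pqr by auto
    with \<open>r \<in> S\<close> show ?thesis using tf pqr unfolding three_free_def by blast
  qed
qed

text \<open>No progression ending at c + y can reach into Lo, as c exceeds twice every element of Lo
  and y.\<close>

lemma three_free_insert_shifted:
  fixes c m y :: nat
  assumes Lo: "\<forall>x\<in>Lo. x \<le> m" and c: "2 * m < c" and y: "y \<le> m"
    and U: "\<forall>u\<in>U. u < y"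
    and tf_y: "three_free (insert y U)" and tf: "three_free (Lo \<union> (+) c ` U)"
  shows "three_free (insert (c + y) (Lo \<union> (+) c ` U))"
  unfolding three_free_def
proof (intro ballI impI)
  fix p q r
  assume mem: "p \<in> insert (c + y) (Lo \<union> (+) c ` U)" "q \<in> insert (c + y) (Lo \<union> (+) c ` U)"
    "r \<in> insert (c + y) (Lo \<union> (+) c ` U)" and pqr: "p < q \<and> q < r"
  show "p + r \<noteq> 2 * q"
  proof (cases "r = c + y")
    case False
    then have r: "r \<in> Lo \<union> (+) c ` U" using mem(3) by simp
    then have "r < c + y" using Lo U c by auto
    then have "p \<in> Lo \<union> (+) c ` U" "q \<in> Lo \<union> (+) c ` U" using mem pqr by auto
    with r tf pqr show ?thesis unfolding three_free_def by blast
  next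
    case r: True
    show ?thesis
    proof
      assume ap: "p + r = 2 * q"
      have "q \<notin> Lo" using Lo c ap r pqr by fastforce
      then obtain u where u: "u \<in> U" "q = c + u" using mem(2) pqr r by auto
      have "p \<notin> Lo" using Lo c y ap r u by fastforce
      then obtain v where v: "v \<in> U" "p = c + v" using mem(1) pqr r by auto
      have "v < u" "u < y" "v + y = 2 * u" using pqr u v ap r U by auto
      with tf_y u v show False unfolding three_free_def by blast
    qed
  qed
qed

lemma length_greedy_ext: "length (greedy_ext xs n) = length xs + n"
  by (induct n) (simp_all add: Let_def)

lemma nth_greedy_ext_stable:
  assumes "n \<le> n'" "i < length xs + n"
  shows "greedy_ext xs n' ! i = greedy_ext xs n ! i"
  using assms(1)
proof (induction n' rule: dec_induct)
  case (step n')
  then show ?case using assms(2) by (simp add: Let_def nth_append length_greedy_ext)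
qed simp

lemma sorted_wrt_less_le_last: "sorted_wrt (<) ys \<Longrightarrow> e \<in> set ys \<Longrightarrow> e \<le> (last ys :: nat)"
  by (induct ys rule: rev_induct) (auto simp: sorted_wrt_append)

lemma greedy_ext_sorted_three_free:
  assumes "xs \<noteq> []" "sorted_wrt (<) xs" "three_free (set xs)"
  shows "sorted_wrt (<) (greedy_ext xs n) \<and> three_free (set (greedy_ext xs n))"
proof (induct n)
  case (Suc n)
  define ys where "ys = greedy_ext xs n"
  define P where "P = (\<lambda>x. last ys < x \<and> three_free (insert x (set ys)))"
  have le_last: "\<And>e. e \<in> set ys \<Longrightarrow> e \<le> last ys"
    using sorted_wrt_less_le_last Suc ys_def by blast
  have "ys \<noteq> []" using assms(1) length_greedy_ext[of xs n] ys_def by auto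
  then have "P (2 * last ys + 1)"
    unfolding P_def using Suc le_last ys_def
    by (auto intro!: three_free_insert_large simp: le_imp_less_Suc)
  then have "P (LEAST x. P x)" by (rule LeastI)
  then have "sorted_wrt (<) (ys @ [LEAST x. P x]) \<and> three_free (set (ys @ [LEAST x. P x]))"
    using Suc le_last ys_def unfolding P_def by (force simp: sorted_wrt_append)
  then show ?case by (simp add: ys_def P_def Let_def)
qed (use assms in simp)

lemma greedy_ext_eq_map_stanley:
  assumes "finite A" "A \<noteq> {}"
  shows "greedy_ext (sorted_list_of_set A) n = map (stanley A) [0..<card A + n]"
proof (rule nth_equalityI)
  let ?xs = "sorted_list_of_set A"
  have "card A \<ge> 1" using assms by (simp add: Suc_le_eq card_gt_0_iff)
  fix i assume i_len: "i < length (greedy_ext ?xs n)"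
  then have i: "i < length ?xs + min i n"
    using \<open>card A \<ge> 1\<close> by (simp add: length_greedy_ext min_def)
  have "greedy_ext ?xs n ! i = greedy_ext ?xs (min i n) ! i"
    by (rule nth_greedy_ext_stable[OF min.cobounded2 i])
  also have "\<dots> = stanley A i"
    unfolding stanley_def by (rule nth_greedy_ext_stable[OF min.cobounded1 i, symmetric])
  finally show "greedy_ext ?xs n ! i = map (stanley A) [0..<card A + n] ! i"
    using i_len by (simp add: length_greedy_ext)
qed (simp add: length_greedy_ext)

lemma stanley_sorted_three_free:
  assumes "finite A" "three_free A" "A \<noteq> {}"
  shows "sorted_wrt (<) (map (stanley A) [0..<card A + n])"
    and "three_free (stanley A ` {..<card A + n})"
  using greedy_ext_sorted_three_free[of "sorted_list_of_set A" n] assms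
  by (simp_all add: greedy_ext_eq_map_stanley atLeast0LessThan)

lemma strict_mono_stanley:
  assumes "finite A" "three_free A" "A \<noteq> {}"
  shows "strict_mono (stanley A)"
proof (rule strict_monoI)
  fix i j :: nat assume "i < j"
  with stanley_sorted_three_free(1)[OF assms, of "Suc j"] show "stanley A i < stanley A j"
    by (simp add: sorted_wrt_iff_nth_less del: upt_Suc)
qed

lemma three_free_range_stanley:
  assumes "finite A" "three_free A" "A \<noteq> {}"
  shows "three_free (range (stanley A))"
proof (rule three_free_range_if_prefixes)
  fix M
  show "three_free (stanley A ` {..<M})"
    using stanley_sorted_three_free(2)[OF assms, of M] by (rule three_free_subset[rotated]) auto
qed

lemma stanley_eventually_greedy:
  assumes "finite A" "A \<noteq> {}" "card A \<le> Suc n"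
    and y: "stanley A n < y" "y < stanley A (Suc n)"
  shows "\<not> three_free (insert y (stanley A ` {..n}))"
proof -
  define d where "d = Suc n - card A"
  define ys where "ys = greedy_ext (sorted_list_of_set A) d"
  have ys: "ys = map (stanley A) [0..<Suc n]"
    using assms(3) by (simp add: ys_def d_def greedy_ext_eq_map_stanley[OF assms(1,2)])
  have "stanley A (Suc n) = greedy_ext (sorted_list_of_set A) (Suc d) ! Suc n"
    unfolding greedy_ext_eq_map_stanley[OF assms(1,2)] using assms(3)
    by (simp add: d_def del: upt_Suc)
  also have "\<dots> = (LEAST x. last ys < x \<and> three_free (insert x (set ys)))"
    using assms(3) by (simp add: ys_def Let_def nth_append length_greedy_ext d_def)
  finally have "\<not> (last ys < y \<and> three_free (insert y (set ys)))"
    using y(2) by (metis not_less_Least)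
  moreover have "last ys = stanley A n" by (simp add: ys)
  moreover have "set ys = stanley A ` {..n}"
    by (simp add: ys atLeast0LessThan lessThan_Suc_atMost del: upt_Suc)
  ultimately show ?thesis using y(1) by simp
qed

lemma is_stanley_zero:
  assumes "is_stanley a"
  shows "a 0 = 0"
proof -
  obtain A where A: "finite A" "three_free A" "0 \<in> A" and a: "a = stanley A"
    using assms unfolding is_stanley_def by blast
  have ne: "A \<noteq> {}" using A(3) by blast
  have "0 \<in> set (map (stanley A) [0..<card A])"
    using greedy_ext_eq_map_stanley[OF A(1) ne, of 0] A(1,3)
    by (metis add_0_right greedy_ext.simps(1) set_sorted_list_of_set)
  then obtain i where "stanley A i = 0" by auto
  with strict_mono_stanley[OF A(1,2) ne] show "a 0 = 0"
    unfolding a by (metis neq0_conv not_less_zero strict_monoD)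
qed

lemma independent_char0_block:
  assumes "independent a 0"
  obtains T where "N < T" "\<And>i. i < T \<Longrightarrow> a (T + i) = a T + a i" "a T = 2 * a (T - 1) + 1"
proof -
  obtain K where K: "\<And>k. K \<le> k \<Longrightarrow> (\<forall>i<2^k. a (2^k + i) = a (2^k) + a i) \<and>
      int (a (2^k)) = 2 * int (a (2^k - 1)) - 0 + 1"
    using assms unfolding independent_def by blast
  define k where "k = max K N"
  have "N < 2^k" using less_exp[of k] unfolding k_def by (meson le_less_trans max.cobounded2)
  moreover from K[of k] have "\<And>i. i < 2^k \<Longrightarrow> a (2^k + i) = a (2^k) + a i"
    and "a (2^k) = 2 * a (2^k - 1) + 1"
    unfolding k_def by auto
  ultimately show thesis by (rule that)
qed

lemma image_atMost_add_block:
  fixes a :: "nat \<Rightarrow> nat"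
  assumes "\<And>i. i \<le> n \<Longrightarrow> a (T + i) = a T + a i"
  shows "a ` {..T + n} = a ` {..<T} \<union> (+) (a T) ` a ` {..n}"
proof -
  have "x \<in> (+) T ` {..n}" if "T \<le> x" "x \<le> T + n" for x
    using that by (intro image_eqI[of _ _ "x - T"]) auto
  then have "{..T + n} = {..<T} \<union> (+) T ` {..n}"
    by (auto simp: not_less) (meson not_le)
  then show ?thesis
    using assms by (auto simp: image_image image_Un intro!: image_cong)
qed

lemma independent_char0_least_extension:
  assumes st: "is_stanley a" and ind: "independent a 0"
    and y: "a n < y" and tf_y: "three_free (insert y (a ` {..n}))"
  shows "a (Suc n) \<le> y"
proof (rule ccontr)
  assume "\<not> a (Suc n) \<le> y"
  then have y_less: "y < a (Suc n)" by simp
  obtain A where A: "finite A" "three_free A" "0 \<in> A" and a: "a = stanley A"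
    using st unfolding is_stanley_def by blast
  have ne: "A \<noteq> {}" using A(3) by blast
  have mono: "strict_mono a" unfolding a using strict_mono_stanley[OF A(1,2) ne] .
  have tf_range: "three_free (range a)" unfolding a using three_free_range_stanley[OF A(1,2) ne] .
  obtain T where T: "card A + Suc n < T" and block: "\<And>i. i < T \<Longrightarrow> a (T + i) = a T + a i"
    and aT: "a T = 2 * a (T - 1) + 1"
    using independent_char0_block[OF ind] by blast
  have img: "a ` {..T + n} = a ` {..<T} \<union> (+) (a T) ` a ` {..n}"
    using T by (intro image_atMost_add_block block) simp
  have "three_free (insert (a T + y) (a ` {..T + n}))"
    unfolding img
  proof (rule three_free_insert_shifted)
    show "\<forall>x\<in>a ` {..<T}. x \<le> a (T - 1)" using mono by (auto simp: strict_mono_less_eq)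
    show "2 * a (T - 1) < a T" using aT by simp
    have "a (Suc n) \<le> a (T - 1)" using mono T by (simp add: strict_mono_less_eq)
    then show "y \<le> a (T - 1)" using y_less by simp
    show "\<forall>u\<in>a ` {..n}. u < y"
    proof
      fix u assume "u \<in> a ` {..n}"
      then obtain i where "i \<le> n" "u = a i" by auto
      with y strict_mono_less_eq[OF mono, of i n] show "u < y" by simp
    qed
    show "three_free (insert y (a ` {..n}))" by (rule tf_y)
    show "three_free (a ` {..<T} \<union> (+) (a T) ` a ` {..n})"
      unfolding img[symmetric] using tf_range by (rule three_free_subset[rotated]) auto
  qed
  moreover have "\<not> three_free (insert (a T + y) (a ` {..T + n}))"
    unfolding a
  proof (rule stanley_eventually_greedy[OF A(1) ne])
    show "card A \<le> Suc (T + n)" using T by simp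
    show "stanley A (T + n) < stanley A T + y" using block[of n] T y unfolding a by simp
    show "stanley A T + y < stanley A (Suc (T + n))"
      using block[of "Suc n"] T y_less unfolding a by simp
  qed
  ultimately show False by contradiction
qed

lemma eq_stanley_zero_if_least_extensions:
  assumes zero: "a 0 = 0" and mono: "strict_mono a" and tf: "three_free (range a)"
    and least: "\<And>n y. a n < y \<Longrightarrow> three_free (insert y (a ` {..n})) \<Longrightarrow> a (Suc n) \<le> y"
  shows "a = stanley {0}"
proof
  have greedy: "greedy_ext [0] n = map a [0..<Suc n]" for n
  proof (induction n)
    case 0
    then show ?case using zero by simp
  next
    case (Suc n)
    have "(LEAST y. a n < y \<and> three_free (insert y (a ` {..n}))) = a (Suc n)"
    proof (rule Least_equality)
      have "insert (a (Suc n)) (a ` {..n}) \<subseteq> range a" by auto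
      then show "a n < a (Suc n) \<and> three_free (insert (a (Suc n)) (a ` {..n}))"
        using mono tf by (auto simp: strict_mono_Suc_iff intro: three_free_subset)
    qed (use least in blast)
    moreover have "set (map a [0..<Suc n]) = a ` {..n}"
      by (simp add: atLeast0LessThan lessThan_Suc_atMost del: upt_Suc)
    moreover have "last (map a [0..<Suc n]) = a n" by simp
    moreover have "map a [0..<Suc (Suc n)] = map a [0..<Suc n] @ [a (Suc n)]" by simp
    ultimately show ?case using Suc by (simp add: Let_def del: upt_Suc)
  qed
  fix n
  show "a n = stanley {0} n"
    using greedy[of n] unfolding stanley_def by (simp del: upt_Suc)
qed

lemma independent_char0_eq_stanley_zero:
  assumes "is_stanley a" "independent a 0"
  shows "a = stanley {0}"
proof (rule eq_stanley_zero_if_least_extensions)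
  obtain A where A: "finite A" "three_free A" "0 \<in> A" and a: "a = stanley A"
    using assms(1) unfolding is_stanley_def by blast
  then have "A \<noteq> {}" by blast
  with A show "strict_mono a" "three_free (range a)"
    unfolding a by (simp_all add: strict_mono_stanley three_free_range_stanley)
qed (use assms is_stanley_zero independent_char0_least_extension in auto)

theorem mainTheorem13:
  fixes a a' :: "nat \<Rightarrow> nat" and \<sigma> :: int
  assumes "is_stanley a"
    and "regular_with a 0 a' \<sigma>"
  shows "a' = stanley {0}"
  using assms(2) unfolding regular_with_def
  by (blast intro: independent_char0_eq_stanley_zero)

end
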